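(* Let $T$ be a binary phylogenetic $X$-tree with $|X| = n \geq 3$. Let $x,y \in X$ with $x \neq y$ such that $x,y$ do not form a cherry in $T$. Let $q = \max\{2, \lfloor (n-1)/2 \rfloor\}$. Then $T$ contains $q$ pairwise edge-disjoint leaf-to-leaf paths $P_1,\ldots,P_q$ such that $x$ is an endpoint of $P_1$ and $y$ is an endpoint of $P_2$.
   Context: A phylogenetic $X$-tree is a tree with no vertices of degree 2 whose leaves are bijectively labelled by (and identified with) $X$; binary means maximum degree 3. Two leaves $x,y$ form a cherry $[x,y]$ if they are adjacent to the same vertex. A leaf-to-leaf path is a path in $T$ whose two endpoints are leaves (distinct) and whose interior vertices are non-leaves. *)

theory Defs
  imports Main
begin

definition graph :: "'v set \<Rightarrow> 'v set set \<Rightarrow> bool" where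
  "graph V E \<longleftrightarrow> finite V \<and> (\<forall>e\<in>E. e \<subseteq> V \<and> card e = 2)"

definition adj :: "'v set set \<Rightarrow> 'v \<Rightarrow> 'v \<Rightarrow> bool" where
  "adj E u v \<longleftrightarrow> {u, v} \<in> E"

definition degree :: "'v set set \<Rightarrow> 'v \<Rightarrow> nat" where
  "degree E v = card {e \<in> E. v \<in> e}"

definition connected_graph :: "'v set \<Rightarrow> 'v set set \<Rightarrow> bool" where
  "connected_graph V E \<longleftrightarrow>
     (\<forall>u\<in>V. \<forall>v\<in>V. (u, v) \<in> {(a, b). adj E a b}\<^sup>*)"

definition is_tree :: "'v set \<Rightarrow> 'v set set \<Rightarrow> bool" where
  "is_tree V E \<longleftrightarrow> graph V E \<and> V \<noteq> {} \<and> connected_graph V E \<and> card E + 1 = card V"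

definition leaves :: "'v set \<Rightarrow> 'v set set \<Rightarrow> 'v set" where
  "leaves V E = {v \<in> V. degree E v = 1}"

definition binary_phylo_tree :: "'v set \<Rightarrow> 'v set set \<Rightarrow> 'v set \<Rightarrow> bool" where
  "binary_phylo_tree V E X \<longleftrightarrow> is_tree V E \<and> leaves V E = X \<and>
     (\<forall>v\<in>V. degree E v \<noteq> 2 \<and> degree E v \<le> 3)"

definition cherry :: "'v set set \<Rightarrow> 'v \<Rightarrow> 'v \<Rightarrow> bool" where
  "cherry E x y \<longleftrightarrow> (\<exists>w. adj E x w \<and> adj E y w)"

definition is_path :: "'v set \<Rightarrow> 'v set set \<Rightarrow> 'v list \<Rightarrow> bool" where
  "is_path V E p \<longleftrightarrow> p \<noteq> [] \<and> distinct p \<and> set p \<subseteq> V \<and>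
     (\<forall>i. Suc i < length p \<longrightarrow> adj E (p ! i) (p ! Suc i))"

definition path_edges :: "'v list \<Rightarrow> 'v set set" where
  "path_edges p = {{p ! i, p ! Suc i} | i. Suc i < length p}"

definition leaf_to_leaf_path :: "'v set \<Rightarrow> 'v set set \<Rightarrow> 'v list \<Rightarrow> bool" where
  "leaf_to_leaf_path V E p \<longleftrightarrow> is_path V E p \<and> length p \<ge> 2 \<and>
     hd p \<in> leaves V E \<and> last p \<in> leaves V E \<and>
     (\<forall>i. 0 < i \<and> i < length p - 1 \<longrightarrow> p ! i \<notin> leaves V E)"

definition endpoint :: "'v \<Rightarrow> 'v list \<Rightarrow> bool" where
  "endpoint x p \<longleftrightarrow> x = hd p \<or> x = last p"

end

theory Submission
  imports Defs "HOL-Library.Disjoint_Sets"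
begin

text \<open>Let u be the neighbour of the leaf x and a the neighbour of u towards y. As x and y do not
  form a cherry, both u and a are inner vertices of degree 3, so the edge {u,a} splits the tree
  into two sides, containing x and y respectively, each with at least two leaves. In any tree an
  even set of vertices can be paired up by edge-disjoint paths (remove a leaf and reroute its
  partner through its neighbour). Pairing the leaves of each side, after dropping one leaf other
  than x resp. y if their number is odd, yields edge-disjoint leaf-to-leaf paths that stay on
  their side (as {u,a} is a bridge), at least one per side and at least (n - 2)/2 in total,
  with x and y among the endpoints.\<close>

abbreviation adj_rel :: "'v set set \<Rightarrow> ('v \<times> 'v) set" where
  "adj_rel E \<equiv> {(a, b). adj E a b}"

lemma adj_commute: "adj E a b \<longleftrightarrow> adj E b a"
  by (simp add: adj_def insert_commute)

lemma adj_rel_rtrancl_sym: "(a, b) \<in> (adj_rel E)\<^sup>* \<Longrightarrow> (b, a) \<in> (adj_rel E)\<^sup>*"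
proof -
  have "sym (adj_rel E)" by (auto simp: sym_def adj_commute)
  then show "(a, b) \<in> (adj_rel E)\<^sup>* \<Longrightarrow> (b, a) \<in> (adj_rel E)\<^sup>*"
    using sym_rtrancl symD by metis
qed

lemma adj_rel_rtrancl_mono: "E \<subseteq> F \<Longrightarrow> (a, b) \<in> (adj_rel E)\<^sup>* \<Longrightarrow> (a, b) \<in> (adj_rel F)\<^sup>*"
  by (erule rtrancl_mono[THEN subsetD, rotated]) (auto simp: adj_def)

lemma adj_rel_rtrancl_isolated:
  assumes "\<forall>e\<in>E. v \<notin> e" "(v, z) \<in> (adj_rel E)\<^sup>*" shows "z = v"
  using assms(2) by (induction rule: rtrancl_induct) (use assms(1) in \<open>auto simp: adj_def\<close>)

subsection \<open>Paths\<close>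

definition path_ends :: "'v list \<Rightarrow> 'v set" where
  "path_ends p = {hd p, last p}"

lemma path_ends_subset_set: "p \<noteq> [] \<Longrightarrow> path_ends p \<subseteq> set p"
  by (simp add: path_ends_def)

lemma endpoint_iff_in_path_ends: "endpoint x p \<longleftrightarrow> x \<in> path_ends p"
  by (auto simp: endpoint_def path_ends_def)

lemma path_edges_rev_subset: "path_edges (rev q) \<subseteq> path_edges q"
proof
  fix e assume "e \<in> path_edges (rev q)"
  then obtain i where i: "Suc i < length q" "e = {rev q ! i, rev q ! Suc i}"
    by (auto simp: path_edges_def)
  let ?j = "length q - Suc (Suc i)"
  have "Suc ?j < length q" "length q - Suc i = Suc ?j" using i by simp_all
  moreover have "e = {q ! ?j, q ! Suc ?j}"
    using i calculation by (auto simp: rev_nth)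
  ultimately show "e \<in> path_edges q" by (auto simp: path_edges_def)
qed

lemma path_edges_rev: "path_edges (rev p) = path_edges p"
  using path_edges_rev_subset[of p] path_edges_rev_subset[of "rev p"] by auto

lemma is_path_rev: assumes "is_path V E p" shows "is_path V E (rev p)"
proof -
  have "adj E (rev p ! i) (rev p ! Suc i)" if i: "Suc i < length p" for i
  proof -
    let ?j = "length p - Suc (Suc i)"
    have "Suc ?j < length p" using i by simp
    then have "adj E (p ! ?j) (p ! Suc ?j)" using assms by (simp add: is_path_def)
    moreover have "length p - Suc i = Suc ?j" using i by simp
    ultimately show ?thesis using i by (simp add: rev_nth adj_commute)
  qed
  then show ?thesis using assms by (auto simp: is_path_def)
qed

lemma is_path_Cons:
  assumes "is_path V E p" "v \<in> V" "v \<notin> set p" "adj E v (hd p)"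
  shows "is_path V E (v # p)"
proof -
  have "adj E ((v # p) ! i) ((v # p) ! Suc i)" if "Suc i < length (v # p)" for i
    using assms that by (cases i) (auto simp: is_path_def hd_conv_nth)
  then show ?thesis using assms by (auto simp: is_path_def)
qed

lemma path_edges_Cons:
  assumes "p \<noteq> []" shows "path_edges (v # p) = insert {v, hd p} (path_edges p)"
proof
  show "path_edges (v # p) \<subseteq> insert {v, hd p} (path_edges p)"
  proof
    fix e assume "e \<in> path_edges (v # p)"
    then obtain i where i: "Suc i < Suc (length p)" "e = {(v # p) ! i, (v # p) ! Suc i}"
      by (auto simp: path_edges_def)
    then show "e \<in> insert {v, hd p} (path_edges p)"
      using assms by (cases i) (auto simp: hd_conv_nth path_edges_def)
  qed
next
  show "insert {v, hd p} (path_edges p) \<subseteq> path_edges (v # p)"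
  proof
    fix e assume "e \<in> insert {v, hd p} (path_edges p)"
    then show "e \<in> path_edges (v # p)"
    proof
      assume "e = {v, hd p}"
      then have "e = {(v # p) ! 0, (v # p) ! Suc 0}" using assms by (simp add: hd_conv_nth)
      then show ?thesis using assms unfolding path_edges_def by force
    next
      assume "e \<in> path_edges p"
      then obtain i where "Suc i < length p" "e = {p ! i, p ! Suc i}" by (auto simp: path_edges_def)
      then have "Suc (Suc i) < length (v # p)" "e = {(v # p) ! Suc i, (v # p) ! Suc (Suc i)}" by auto
      then show ?thesis unfolding path_edges_def by blast
    qed
  qed
qed

lemma path_edges_subset_edges: "is_path V E p \<Longrightarrow> path_edges p \<subseteq> E"
  by (auto simp: path_edges_def is_path_def adj_def)

lemma path_edges_subset_set: "e \<in> path_edges p \<Longrightarrow> e \<subseteq> set p"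
  by (auto simp: path_edges_def)

lemma is_path_mono: "is_path V E p \<Longrightarrow> V \<subseteq> V' \<Longrightarrow> E \<subseteq> E' \<Longrightarrow> is_path V' E' p"
  by (auto simp: is_path_def adj_def)

lemma is_path_hd_neq_last: "is_path V E p \<Longrightarrow> 2 \<le> length p \<Longrightarrow> hd p \<noteq> last p"
  by (auto simp: is_path_def hd_conv_nth last_conv_nth nth_eq_iff_index_eq)

lemma is_path_orient:
  assumes "is_path V E p" "endpoint u p"
  obtains q where "is_path V E q" "length q = length p"
    "path_edges q = path_edges p" "path_ends q = path_ends p" "hd q = u"
proof (cases "hd p = u")
  case False
  then have "last p = u" using assms(2) by (auto simp: endpoint_def)
  moreover have "p \<noteq> []" using assms(1) by (simp add: is_path_def)
  ultimately show ?thesis using that[of "rev p"] is_path_rev[OF assms(1)] path_edges_rev[of p]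
    by (auto simp: hd_rev last_rev path_ends_def)
qed (use that assms in blast)

subsection \<open>Degrees and leaf removal in trees\<close>

lemma graph_finite_edges: "graph V E \<Longrightarrow> finite E"
  unfolding graph_def by (meson Pow_iff finite_Pow_iff rev_finite_subset subsetI)

lemma graph_edge_other_end:
  assumes "graph V E" "f \<in> E" "d \<in> f"
  obtains e where "f = {d,e}" "e \<noteq> d"
proof -
  obtain a b where ab: "f = {a,b}" "a \<noteq> b" using assms by (auto simp: graph_def card_2_iff)
  show ?thesis
  proof (cases "d = a")
    case False
    then have "f = {d,a}" using ab assms(3) by auto
    then show ?thesis using that False by blast
  qed (use ab that in blast)
qed

lemma degree_pos_if_edge: assumes "finite E" "{c,d} \<in> E" shows "0 < degree E d"
proof -
  have "{c,d} \<in> {e \<in> E. d \<in> e}" using assms(2) by simp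
  moreover have "finite {e \<in> E. d \<in> e}" using assms(1) by simp
  ultimately show ?thesis unfolding degree_def using card_gt_0_iff by blast
qed

lemma degree_one_unique_edge:
  assumes "degree E d = 1" "{c,d} \<in> E" "e \<in> E" "d \<in> e" shows "e = {c,d}"
proof -
  obtain s where s: "{e \<in> E. d \<in> e} = {s}" using assms(1) unfolding degree_def by (rule card_1_singletonE)
  have "{c,d} \<in> {e \<in> E. d \<in> e}" "e \<in> {e \<in> E. d \<in> e}" using assms(2-4) by simp_all
  then show ?thesis unfolding s by simp
qed

lemma degree_one_edge:
  assumes "graph V E" "degree E v = 1"
  obtains u where "{v,u} \<in> E" "u \<noteq> v" "\<forall>e\<in>E. v \<in> e \<longrightarrow> e = {v,u}"
proof -
  obtain f where f: "{e \<in> E. v \<in> e} = {f}" using assms(2) unfolding degree_def by (rule card_1_singletonE)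
  then have "f \<in> E" "v \<in> f" by (metis (no_types, lifting) insertI1 mem_Collect_eq)+
  then obtain u where u: "f = {v,u}" "u \<noteq> v" using graph_edge_other_end[OF assms(1)] by blast
  have "\<forall>e\<in>E. v \<in> e \<longrightarrow> e = f" using f by (metis (mono_tags, lifting) mem_Collect_eq singletonD)
  then show ?thesis using that u \<open>f \<in> E\<close> by blast
qed

lemma sum_degree_eq_twice_card_edges:
  assumes "graph V E"
  shows "(\<Sum>v\<in>V. degree E v) = 2 * card E"
proof -
  have fin: "finite V" "finite E" using assms graph_finite_edges by (auto simp: graph_def)
  have card_filter: "card {a \<in> A. P a} = (\<Sum>a\<in>A. if P a then 1 else 0)" if "finite A"
    for A :: "'b set" and P
    using that by (simp add: sum.inter_filter[symmetric])
  have "(\<Sum>v\<in>V. degree E v) = (\<Sum>v\<in>V. \<Sum>e\<in>E. if v \<in> e then 1 else (0::nat))"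
    unfolding degree_def using fin by (simp add: card_filter)
  also have "\<dots> = (\<Sum>e\<in>E. \<Sum>v\<in>V. if v \<in> e then 1 else (0::nat))" by (rule sum.swap)
  also have "\<dots> = (\<Sum>e\<in>E. card e)"
  proof (rule sum.cong)
    fix e assume "e \<in> E"
    then have "{v \<in> V. v \<in> e} = e" using assms by (auto simp: graph_def)
    then show "(\<Sum>v\<in>V. if v \<in> e then 1 else 0) = card e" using card_filter[OF fin(1)] by metis
  qed simp
  also have "\<dots> = (\<Sum>e\<in>E. 2)" using assms by (intro sum.cong) (auto simp: graph_def)
  finally show ?thesis by simp
qed

lemma tree_has_leaf:
  assumes "is_tree V E" "2 \<le> card V"
  shows "\<exists>v\<in>V. degree E v = 1"
proof (rule ccontr)
  assume no_leaf: "\<not> ?thesis"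
  have g: "graph V E" using assms(1) by (simp add: is_tree_def)
  have "2 \<le> degree E v" if v: "v \<in> V" for v
  proof -
    have "1 \<le> card (V - {v})" using assms(2) v by (simp add: card_Diff_singleton_if)
    then obtain w where "w \<in> V" "w \<noteq> v" by (metis Diff_iff card.empty ex_in_conv insertI1 not_one_le_zero)
    then have "(w, v) \<in> (adj_rel E)\<^sup>*" using assms(1) v by (simp add: is_tree_def connected_graph_def)
    then obtain z where "adj E z v" using \<open>w \<noteq> v\<close> by (auto elim: rtranclE)
    then have "0 < degree E v" using degree_pos_if_edge graph_finite_edges[OF g] by (simp add: adj_def)
    moreover have "degree E v \<noteq> 1" using no_leaf v by blast
    ultimately show ?thesis by linarith
  qed
  then have "(\<Sum>v\<in>V. 2) \<le> (\<Sum>v\<in>V. degree E v)" by (intro sum_mono)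
  then show False using sum_degree_eq_twice_card_edges[OF g] assms(1) by (simp add: is_tree_def)
qed

lemma adj_rel_rtrancl_remove_leaf:
  assumes "u \<noteq> v" "\<forall>e\<in>F. v \<in> e \<longrightarrow> e = {v,u}"
    and "(a, b) \<in> (adj_rel F)\<^sup>*" "a \<noteq> v"
  shows "(a, if b = v then u else b) \<in> (adj_rel (F - {{v,u}}))\<^sup>*"
  using assms(3)
proof (induction rule: rtrancl_induct)
  case (step y z)
  have yz: "{y,z} \<in> F" using step(2) by (simp add: adj_def)
  show ?case
  proof (cases "y = v \<or> z = v")
    case True
    then have "{y,z} = {v,u}" using assms(2) yz by auto
    then show ?thesis using step.IH True assms(1) by (auto simp: doubleton_eq_iff)
  next
    case False
    then have "(y,z) \<in> adj_rel (F - {{v,u}})" using yz by (auto simp: adj_def doubleton_eq_iff)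
    then show ?thesis using step.IH False by (simp add: rtrancl_into_rtrancl)
  qed
qed (use assms(4) in simp)

lemma tree_remove_leaf:
  assumes "is_tree V E" "{v,u} \<in> E" "u \<noteq> v" "\<forall>e\<in>E. v \<in> e \<longrightarrow> e = {v,u}"
  shows "is_tree (V - {v}) (E - {{v,u}})"
proof -
  have g: "graph V E" and fin: "finite V" using assms(1) by (auto simp: is_tree_def graph_def)
  have vu: "v \<in> V" "u \<in> V" using assms(2) g by (auto simp: graph_def)
  have "connected_graph (V - {v}) (E - {{v,u}})"
    unfolding connected_graph_def
  proof (intro ballI)
    fix a b assume ab: "a \<in> V - {v}" "b \<in> V - {v}"
    then have "(a, b) \<in> (adj_rel E)\<^sup>*" using assms(1) by (auto simp: is_tree_def connected_graph_def)
    then have "(a, if b = v then u else b) \<in> (adj_rel (E - {{v,u}}))\<^sup>*"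
      using adj_rel_rtrancl_remove_leaf[OF assms(3,4)] ab by blast
    then show "(a, b) \<in> (adj_rel (E - {{v,u}}))\<^sup>*" using ab by simp
  qed
  moreover have "graph (V - {v}) (E - {{v,u}})" using g assms(4) unfolding graph_def by blast
  moreover have "card E > 0" using assms(2) graph_finite_edges[OF g] card_gt_0_iff by blast
  then have "card (E - {{v,u}}) + 1 = card (V - {v})"
    using assms(1,2) vu fin graph_finite_edges[OF g] by (auto simp: is_tree_def card_Diff_singleton)
  ultimately show ?thesis using vu assms(3) unfolding is_tree_def by blast
qed

lemma tree_leaf_induct[consumes 1, case_names single leaf]:
  assumes "is_tree V E"
  and single: "\<And>V E. is_tree V E \<Longrightarrow> card V = 1 \<Longrightarrow> E = {} \<Longrightarrow> P V E"
  and leaf: "\<And>V E v u. is_tree V E \<Longrightarrow> {v,u} \<in> E \<Longrightarrow> u \<noteq> v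
      \<Longrightarrow> (\<forall>e\<in>E. v \<in> e \<longrightarrow> e = {v,u}) \<Longrightarrow> v \<in> V \<Longrightarrow> u \<in> V
      \<Longrightarrow> P (V - {v}) (E - {{v,u}}) \<Longrightarrow> P V E"
  shows "P V E"
  using assms(1)
proof (induction "card V" arbitrary: V E rule: less_induct)
  case less
  have g: "graph V E" and fin: "finite V" "V \<noteq> {}" using less.prems by (auto simp: is_tree_def graph_def)
  show ?case
  proof (cases "card V = 1")
    case True
    then have "E = {}" using less.prems graph_finite_edges[OF g] by (simp add: is_tree_def)
    then show ?thesis using single less.prems True by blast
  next
    case False
    moreover have "card V \<noteq> 0" using fin by simp
    ultimately have "2 \<le> card V" by linarith
    then obtain v where v: "v \<in> V" "degree E v = 1" using tree_has_leaf[OF less.prems] by blast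
    obtain u where u: "{v,u} \<in> E" "u \<noteq> v" "\<forall>e\<in>E. v \<in> e \<longrightarrow> e = {v,u}"
      using degree_one_edge[OF g v(2)] by blast
    have "u \<in> V" using u(1) g by (auto simp: graph_def)
    moreover have "card (V - {v}) < card V" using v(1) fin by (meson card_Diff1_less)
    ultimately show ?thesis
      using leaf[OF less.prems u v(1)] less.hyps tree_remove_leaf[OF less.prems u] by blast
  qed
qed

subsection \<open>Pairing up an even set of vertices by edge-disjoint paths\<close>

definition path_pairing :: "'v set \<Rightarrow> 'v set set \<Rightarrow> 'v set \<Rightarrow> 'v list set \<Rightarrow> bool" where
  "path_pairing V E S P \<longleftrightarrow> finite P \<and> (\<forall>p\<in>P. is_path V E p \<and> 2 \<le> length p) \<and>
     (\<Union>p\<in>P. path_ends p) = S \<and> disjoint_family_on path_ends P \<and> disjoint_family_on path_edges P"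

lemma path_pairing_mono:
  "path_pairing V' E' S P \<Longrightarrow> V' \<subseteq> V \<Longrightarrow> E' \<subseteq> E \<Longrightarrow> path_pairing V E S P"
  unfolding path_pairing_def using is_path_mono by metis

lemma path_pairing_edges_subset:
  assumes "path_pairing V E S P" shows "(\<Union>p\<in>P. path_edges p) \<subseteq> E"
proof (rule UN_least)
  fix p assume "p \<in> P"
  then have "is_path V E p" using assms by (simp add: path_pairing_def)
  then show "path_edges p \<subseteq> E" by (rule path_edges_subset_edges)
qed

lemma path_pairing_card: assumes "path_pairing V E S P" shows "card S \<le> 2 * card P"
proof -
  have fin: "finite P" and S: "S = (\<Union>p\<in>P. path_ends p)" using assms by (auto simp: path_pairing_def)
  have "card S \<le> (\<Sum>p\<in>P. card (path_ends p))" unfolding S using fin by (rule card_UN_le)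
  also have "\<dots> \<le> (\<Sum>p\<in>P. 2)" by (intro sum_mono) (simp add: path_ends_def card_insert_le_m1)
  finally show ?thesis by simp
qed

lemma path_pairing_insert_edge:
  assumes P: "path_pairing V' E' (S - {v,u}) P" and sub: "V' \<subseteq> V" "E' \<subseteq> E"
    and vu: "{v,u} \<in> E" "{v,u} \<notin> E'" "v \<in> V" "u \<in> V" "v \<noteq> u" "v \<in> S" "u \<in> S"
  shows "path_pairing V E S (insert [v,u] P)"
proof -
  have ends: "(\<Union>p\<in>P. path_ends p) = S - {v,u}" using P by (simp add: path_pairing_def)
  have edges: "(\<Union>p\<in>P. path_edges p) \<subseteq> E'" using path_pairing_edges_subset[OF P] .
  have new: "path_ends [v,u] = {v,u}" "path_edges [v,u] = {{v,u}}"
    by (auto simp: path_ends_def path_edges_def less_Suc_eq)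
  have notin: "[v,u] \<notin> P" using ends new(1) by blast
  have "is_path V E [v,u]" using vu by (auto simp: is_path_def adj_def less_Suc_eq)
  moreover have "path_ends [v,u] \<inter> (\<Union>p\<in>P. path_ends p) = {}" using ends new(1) by blast
  moreover have "path_edges [v,u] \<inter> (\<Union>p\<in>P. path_edges p) = {}" unfolding new(2) using edges vu(2) by blast
  moreover have "(\<Union>p\<in>insert [v,u] P. path_ends p) = S" unfolding UN_insert new(1) ends using vu(6,7) by blast
  ultimately show ?thesis
    using path_pairing_mono[OF P sub] notin
    by (simp add: path_pairing_def disjoint_family_on_insert)
qed

lemma is_path_extend_at_end:
  assumes p: "is_path V' E' p" "2 \<le> length p" "u \<in> path_ends p"
    and sub: "V' \<subseteq> V" "E' \<subseteq> E" and vu: "{v,u} \<in> E" "v \<in> V" "v \<notin> V'"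
  obtains p' where "is_path V E p'" "2 \<le> length p'"
    "path_ends p' = insert v (path_ends p - {u})" "path_edges p' = insert {v,u} (path_edges p)"
proof -
  obtain q where q: "is_path V' E' q" "length q = length p"
    "path_edges q = path_edges p" "path_ends q = path_ends p" "hd q = u"
    using is_path_orient p endpoint_iff_in_path_ends by metis
  have "q \<noteq> []" using q(2) p(2) by auto
  have "last q \<noteq> u" using is_path_hd_neq_last[OF q(1)] q(2,5) p(2) by simp
  moreover have "path_ends p = {u, last q}" using q(4,5) by (simp add: path_ends_def)
  ultimately have "path_ends p - {u} = {last q}" by auto
  moreover have "path_ends (v # q) = {v, last q}" using \<open>q \<noteq> []\<close> by (simp add: path_ends_def)
  ultimately have "path_ends (v # q) = insert v (path_ends p - {u})" by simp
  moreover have "path_edges (v # q) = insert {v,u} (path_edges p)"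
    using path_edges_Cons[OF \<open>q \<noteq> []\<close>] q(3,5) by simp
  moreover have "v \<notin> set q" using q(1) vu(3) by (auto simp: is_path_def)
  then have "is_path V E (v # q)"
    using is_path_Cons[OF is_path_mono[OF q(1) sub] vu(2)] q(5) vu(1) by (simp add: adj_def)
  moreover have "2 \<le> length (v # q)" using q(2) p(2) by simp
  ultimately show ?thesis using that by blast
qed

lemma disjoint_family_on_UN_Diff:
  assumes "disjoint_family_on f P" "p \<in> P"
  shows "(\<Union>x\<in>P - {p}. f x) = (\<Union>x\<in>P. f x) - f p"
  using assms by (auto simp: disjoint_family_on_def)

lemma path_pairing_extend:
  assumes P: "path_pairing V' E' (insert u (S - {v})) P" and sub: "V' \<subseteq> V" "E' \<subseteq> E"
    and vu: "{v,u} \<in> E" "{v,u} \<notin> E'" "v \<in> V" "v \<notin> V'" "v \<in> S" "u \<notin> S"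
  shows "\<exists>P'. path_pairing V E S P'"
proof -
  have fin: "finite P" and paths: "\<forall>p\<in>P. is_path V' E' p \<and> 2 \<le> length p"
    and ends: "(\<Union>p\<in>P. path_ends p) = insert u (S - {v})"
    and dends: "disjoint_family_on path_ends P" and dedges: "disjoint_family_on path_edges P"
    using P by (auto simp: path_pairing_def)
  obtain p0 where p0: "p0 \<in> P" "u \<in> path_ends p0" using ends by blast
  obtain p where p: "is_path V E p" "2 \<le> length p"
    "path_ends p = insert v (path_ends p0 - {u})" "path_edges p = insert {v,u} (path_edges p0)"
    using is_path_extend_at_end[OF _ _ p0(2) sub vu(1,3,4)] paths p0(1) by blast
  have "p \<noteq> []" using p(2) by auto
  then have "v \<in> set p" using p(3) path_ends_subset_set[of p] by auto
  then have "p \<notin> P - {p0}" using paths vu(4) unfolding is_path_def by blast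
  moreover have "path_ends p0 \<subseteq> insert u (S - {v})" using ends p0(1) by blast
  then have "path_ends p \<inter> (\<Union>x\<in>P - {p0}. path_ends x) = {}"
    "(\<Union>x\<in>insert p (P - {p0}). path_ends x) = S"
    unfolding UN_insert disjoint_family_on_UN_Diff[OF dends p0(1)] ends p(3) using p0(2) vu(5,6) by blast+
  moreover have "path_edges p \<inter> (\<Union>x\<in>P - {p0}. path_edges x) = {}"
    using path_pairing_edges_subset[OF P] vu(2)
    unfolding p(4) disjoint_family_on_UN_Diff[OF dedges p0(1)] by blast
  moreover have "\<forall>x\<in>insert p (P - {p0}). is_path V E x \<and> 2 \<le> length x"
    using paths p(1,2) is_path_mono[OF _ sub] by auto
  ultimately have "path_pairing V E S (insert p (P - {p0}))"
    using fin disjoint_family_on_mono[OF _ dends] disjoint_family_on_mono[OF _ dedges]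
    by (simp add: path_pairing_def disjoint_family_on_insert)
  then show ?thesis by blast
qed

lemma even_set_path_pairing:
  assumes "is_tree V E" "S \<subseteq> V" "even (card S)"
  shows "\<exists>P. path_pairing V E S P"
  using assms
proof (induction V E arbitrary: S rule: tree_leaf_induct)
  case (single V E)
  have "finite V" using single(1) by (simp add: is_tree_def graph_def)
  then have "card S \<le> 1" using card_mono[OF _ single.prems(1)] single(2) by simp
  then have "card S = 0" using single.prems(2) by presburger
  then have "S = {}" using single.prems(1) \<open>finite V\<close> by (auto simp: finite_subset)
  then show ?case by (auto simp: path_pairing_def disjoint_family_on_def)
next
  case (leaf V E v u)
  let ?V = "V - {v}" and ?E = "E - {{v,u}}"
  have sub: "?V \<subseteq> V" "?E \<subseteq> E" by auto
  have finS: "finite S" using leaf(1) leaf.prems(1) by (auto simp: is_tree_def graph_def finite_subset)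
  consider "v \<notin> S" | "v \<in> S" "u \<in> S" | "v \<in> S" "u \<notin> S" by blast
  then show ?case
  proof cases
    case 1
    then obtain P where "path_pairing ?V ?E S P" using leaf.IH leaf.prems by blast
    then show ?thesis using path_pairing_mono sub by blast
  next
    case 2
    have "card (S - {v,u}) = card S - 2" using 2 finS leaf(3) by (simp add: card_Diff_subset)
    then have "even (card (S - {v,u}))" using leaf.prems(2) by simp
    then obtain P where "path_pairing ?V ?E (S - {v,u}) P" using leaf.IH leaf.prems(1) by blast
    then show ?thesis using path_pairing_insert_edge[OF _ sub] leaf(2,3,5,6) 2 by blast
  next
    case 3
    have "0 < card S" using 3 finS card_gt_0_iff by blast
    then have "card (insert u (S - {v})) = card S" using 3 finS by (simp add: card_Diff_singleton)
    moreover have "insert u (S - {v}) \<subseteq> ?V" using leaf.prems(1) leaf(3,6) by blast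
    ultimately obtain P where "path_pairing ?V ?E (insert u (S - {v})) P"
      using leaf.IH leaf.prems(2) by metis
    then show ?thesis using path_pairing_extend[OF _ sub] leaf(2,5) 3 by blast
  qed
qed

subsection \<open>The two sides of an edge\<close>

definition side :: "'v set set \<Rightarrow> 'v \<Rightarrow> 'v \<Rightarrow> 'v set" where
  "side E c d = {z. (d, z) \<in> (adj_rel (E - {{c,d}}))\<^sup>*}"

lemma self_in_side: "d \<in> side E c d"
  by (simp add: side_def)

lemma tree_edge_is_bridge:
  assumes "is_tree V E" "{c,d} \<in> E"
  shows "(d, c) \<notin> (adj_rel (E - {{c,d}}))\<^sup>*"
  using assms
proof (induction V E arbitrary: c d rule: tree_leaf_induct)
  case (leaf V E v u)
  have cd: "c \<noteq> d" using leaf(1) leaf.prems by (auto simp: is_tree_def graph_def)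
  show ?case
  proof
    assume r: "(d, c) \<in> (adj_rel (E - {{c,d}}))\<^sup>*"
    show False
    proof (cases "{c,d} = {v,u}")
      case True
      have "\<forall>e\<in>E - {{c,d}}. v \<notin> e" using leaf(4) True by blast
      moreover have "c = v \<or> d = v" using True by (auto simp: doubleton_eq_iff)
      ultimately show False
        using adj_rel_rtrancl_isolated r adj_rel_rtrancl_sym[OF r] cd by metis
    next
      case False
      then have "c \<noteq> v" "d \<noteq> v" using leaf(4) leaf.prems by auto
      moreover have "\<forall>e\<in>E - {{c,d}}. v \<in> e \<longrightarrow> e = {v,u}" using leaf(4) by blast
      ultimately have "(d, c) \<in> (adj_rel (E - {{c,d}} - {{v,u}}))\<^sup>*"
        using adj_rel_rtrancl_remove_leaf[OF leaf(3) _ r] by fastforce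
      moreover have "E - {{c,d}} - {{v,u}} = (E - {{v,u}}) - {{c,d}}" by blast
      ultimately show False using leaf.IH[of c d] leaf.prems False by auto
    qed
  qed
qed simp

lemma not_in_side: "is_tree V E \<Longrightarrow> {c,d} \<in> E \<Longrightarrow> c \<notin> side E c d"
  using tree_edge_is_bridge by (fastforce simp: side_def)

lemma side_step:
  assumes "z \<in> side E c d" "adj E z w" "{z,w} \<noteq> {c,d}"
  shows "w \<in> side E c d"
proof -
  have "(z, w) \<in> adj_rel (E - {{c,d}})" using assms(2,3) by (simp add: adj_def)
  with assms(1) show ?thesis unfolding side_def by (simp add: rtrancl.rtrancl_into_rtrancl)
qed

lemma side_cross:
  assumes "adj E z w" "z \<in> side E c d" "w \<notin> side E c d" shows "{z,w} = {c,d}"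
  using side_step[OF assms(2,1)] assms(3) by blast

lemma side_subset_vertices:
  assumes "graph V E" "{c,d} \<in> E" shows "side E c d \<subseteq> V"
proof
  fix z assume "z \<in> side E c d"
  then have "(d, z) \<in> (adj_rel (E - {{c,d}}))\<^sup>*" by (simp add: side_def)
  then show "z \<in> V"
  proof (induction rule: rtrancl_induct)
    case (step y w)
    then have "{y,w} \<in> E" by (simp add: adj_def)
    then show ?case using assms(1) by (auto simp: graph_def)
  qed (use assms in \<open>auto simp: graph_def\<close>)
qed

lemma vertices_subset_sides:
  assumes "graph V E" "connected_graph V E" "{c,d} \<in> E"
  shows "V \<subseteq> side E c d \<union> side E d c"
proof
  fix z assume "z \<in> V"
  moreover have "d \<in> V" using assms(1,3) by (auto simp: graph_def)
  ultimately have "(d, z) \<in> (adj_rel E)\<^sup>*" using assms(2) by (simp add: connected_graph_def)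
  then have "z \<in> side E c d \<or> z \<in> side E d c"
  proof (induction rule: rtrancl_induct)
    case (step y w)
    show ?case
    proof (cases "{y,w} = {c,d}")
      case True
      then have "w = c \<or> w = d" by (auto simp: doubleton_eq_iff)
      then show ?thesis using self_in_side[of d E c] self_in_side[of c E d] by auto
    next
      case False
      moreover have "{d,c} = {c,d}" "adj E y w" using step(2) by (simp_all add: insert_commute)
      ultimately show ?thesis using step.IH side_step[of y E c d w] side_step[of y E d c w] by metis
    qed
  qed (simp add: self_in_side)
  then show "z \<in> side E c d \<union> side E d c" by blast
qed

lemma sides_disjoint:
  assumes "is_tree V E" "{c,d} \<in> E"
  shows "side E c d \<inter> side E d c = {}"
proof (rule ccontr)
  assume "side E c d \<inter> side E d c \<noteq> {}"
  then obtain z where "(d, z) \<in> (adj_rel (E - {{c,d}}))\<^sup>*" "(c, z) \<in> (adj_rel (E - {{c,d}}))\<^sup>*"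
    by (auto simp: side_def insert_commute)
  then have "(d, c) \<in> (adj_rel (E - {{c,d}}))\<^sup>*" using adj_rel_rtrancl_sym by (meson rtrancl_trans)
  then show False using tree_edge_is_bridge[OF assms] by contradiction
qed

lemma card_split_by_sides:
  assumes "is_tree V E" "{c,d} \<in> E" "A \<subseteq> V"
  shows "card A = card (A \<inter> side E c d) + card (A \<inter> side E d c)"
proof -
  have g: "graph V E" and "connected_graph V E" "finite A"
    using assms(1,3) by (auto simp: is_tree_def graph_def finite_subset)
  then have "A = (A \<inter> side E c d) \<union> (A \<inter> side E d c)"
    using vertices_subset_sides[OF g _ assms(2)] assms(3) by blast
  then show ?thesis
    using card_Un_disjoint[of "A \<inter> side E c d" "A \<inter> side E d c"] sides_disjoint[OF assms(1,2)]
      \<open>finite A\<close> by auto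
qed

lemma side_subset_side:
  assumes "is_tree V E" "{c,d} \<in> E" "{d,e} \<in> E" "e \<noteq> c"
  shows "side E d e \<subseteq> side E c d"
proof
  fix z assume "z \<in> side E d e"
  then have "(e, z) \<in> (adj_rel (E - {{d,e}}))\<^sup>*" by (simp add: side_def)
  then show "z \<in> side E c d"
  proof (induction rule: rtrancl_induct)
    case base
    have "{d,e} \<noteq> {c,d}" using assms(4) by (auto simp: doubleton_eq_iff)
    then have "adj E d e" "{d,e} \<noteq> {c,d}" using assms(3) by (simp_all add: adj_def)
    then show ?case using side_step[OF self_in_side[of d E c]] by simp
  next
    case (step y w)
    have "y \<in> side E d e" using step(1) by (simp add: side_def)
    then have "y \<noteq> d" using not_in_side[OF assms(1,3)] by blast
    moreover have "y \<noteq> c" using step.IH not_in_side[OF assms(1,2)] by blast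
    ultimately have "(y, w) \<in> adj_rel (E - {{c,d}})" using step(2) by (auto simp: adj_def doubleton_eq_iff)
    then show ?case using step.IH by (simp add: side_def rtrancl_into_rtrancl)
  qed
qed

lemma side_eq_singleton_if_leaf:
  assumes "degree E d = 1" "{c,d} \<in> E"
  shows "side E c d = {d}"
proof -
  have iso: "\<forall>e\<in>E - {{c,d}}. d \<notin> e"
  proof (intro ballI notI)
    fix e assume "e \<in> E - {{c,d}}" "d \<in> e"
    then show False using degree_one_unique_edge[OF assms, of e] by simp
  qed
  have "z = d" if "z \<in> side E c d" for z
  proof -
    have "(d, z) \<in> (adj_rel (E - {{c,d}}))\<^sup>*" using that by (simp add: side_def)
    then show "z = d" by (rule adj_rel_rtrancl_isolated[OF iso])
  qed
  then show ?thesis using self_in_side[of d E c] by blast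
qed

lemma exists_neighbour_side:
  assumes "connected_graph V E" "u \<in> V" "z \<in> V" "z \<noteq> u"
  shows "\<exists>a. adj E u a \<and> z \<in> side E u a"
proof -
  let ?F = "{e \<in> E. u \<notin> e}"
  have "(u, z) \<in> (adj_rel E)\<^sup>*" using assms by (simp add: connected_graph_def)
  then have "z = u \<or> (\<exists>a. adj E u a \<and> (a, z) \<in> (adj_rel ?F)\<^sup>*)"
  proof (induction rule: rtrancl_induct)
    case (step w z)
    then have wz: "adj E w z" by simp
    show ?case
    proof (cases "w = u \<or> z = u")
      case True
      show ?thesis
      proof (cases "z = u")
        case False
        then have "adj E u z" using True wz by simp
        then show ?thesis by (intro disjI2 exI[of _ z], simp)
      qed simp
    next
      case False
      then obtain a where a: "adj E u a" "(a, w) \<in> (adj_rel ?F)\<^sup>*" using step.IH by blast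
      have "(w, z) \<in> adj_rel ?F" using wz False by (auto simp: adj_def)
      then show ?thesis using a by (meson rtrancl.rtrancl_into_rtrancl)
    qed
  qed simp
  then obtain a where a: "adj E u a" "(a, z) \<in> (adj_rel ?F)\<^sup>*" using assms(4) by blast
  have "?F \<subseteq> E - {{u,a}}" by blast
  then have "(a, z) \<in> (adj_rel (E - {{u,a}}))\<^sup>*" using a(2) by (rule adj_rel_rtrancl_mono)
  then show ?thesis using a(1) unfolding side_def by blast
qed

lemma nat_exists_step_out:
  fixes i j :: nat
  assumes "P i" "\<not> P j" "i \<le> j"
  shows "\<exists>k. i \<le> k \<and> k < j \<and> P k \<and> \<not> P (Suc k)"
  using assms
proof (induction j)
  case (Suc j)
  then show ?case by (cases "P j") (auto simp: le_Suc_eq less_Suc_eq)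
qed simp

lemma is_path_in_side:
  assumes "is_tree V E" "{c,d} \<in> E" "is_path V E p"
    and "hd p \<in> side E c d" "last p \<in> side E c d"
  shows "set p \<subseteq> side E c d"
\<comment> \<open>A path leaving the side would have to cross the bridge {c,d} twice, both times at d.\<close>
proof (rule ccontr)
  let ?C = "side E c d"
  assume "\<not> set p \<subseteq> ?C"
  then obtain k where k: "k < length p" "p ! k \<notin> ?C" by (metis in_set_conv_nth subsetI)
  have ne: "p \<noteq> []" and dist: "distinct p"
    and steps: "\<And>i. Suc i < length p \<Longrightarrow> adj E (p ! i) (p ! Suc i)"
    using assms(3) by (auto simp: is_path_def)
  have first: "p ! 0 \<in> ?C" and final: "p ! (length p - 1) \<in> ?C"
    using assms(4,5) ne by (simp_all add: hd_conv_nth last_conv_nth)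
  obtain i where i: "i < k" "p ! i \<in> ?C" "p ! Suc i \<notin> ?C"
    using nat_exists_step_out[of "\<lambda>i. p ! i \<in> ?C", OF first k(2)] by auto
  have "k \<le> length p - 1" using k(1) by simp
  then obtain j where j: "k \<le> j" "j < length p - 1" "p ! j \<notin> ?C" "p ! Suc j \<in> ?C"
    using nat_exists_step_out[of "\<lambda>i. p ! i \<notin> ?C", OF k(2)] final by auto
  have "c \<notin> ?C" using not_in_side[OF assms(1,2)] .
  moreover have "{p ! i, p ! Suc i} = {c,d}"
    using side_cross[OF steps i(2,3)] i(1) k(1) by simp
  moreover have "{p ! Suc j, p ! j} = {c,d}"
  proof -
    have "Suc j < length p" using j(2) by simp
    then have "adj E (p ! j) (p ! Suc j)" by (rule steps)
    then have "adj E (p ! Suc j) (p ! j)" by (subst adj_commute)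
    then show ?thesis using j(4,3) by (rule side_cross)
  qed
  ultimately have "p ! i = d" "p ! Suc j = d" using i(2) j(4) by (auto simp: doubleton_eq_iff)
  moreover have "i < length p" "Suc j < length p" using i(1) j(2) k(1) by simp_all
  ultimately have "i = Suc j" using nth_eq_iff_index_eq[OF dist] by metis
  then show False using i(1) j(1) by simp
qed

lemma degree_ge2_other_neighbour:
  assumes "graph V E" "{c,d} \<in> E" "2 \<le> degree E d"
  obtains e where "{d,e} \<in> E" "e \<noteq> c"
proof -
  have "1 \<le> card ({f \<in> E. d \<in> f} - {{c,d}})"
    using assms graph_finite_edges[OF assms(1)] by (simp add: degree_def card_Diff_singleton)
  then have "{f \<in> E. d \<in> f} - {{c,d}} \<noteq> {}" by (metis card.empty not_one_le_zero)
  then obtain f where f: "f \<in> E" "d \<in> f" "f \<noteq> {c,d}" by blast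
  then obtain e where "f = {d,e}" using graph_edge_other_end[OF assms(1)] by blast
  then show ?thesis using that f by (metis insert_commute)
qed

lemma degree_ge3_two_other_neighbours:
  assumes "graph V E" "{c,d} \<in> E" "3 \<le> degree E d"
  obtains e1 e2 where "{d,e1} \<in> E" "{d,e2} \<in> E" "e1 \<noteq> c" "e2 \<noteq> c" "e1 \<noteq> e2"
proof -
  let ?D = "{f \<in> E. d \<in> f} - {{c,d}}"
  have "Suc 1 \<le> card ?D"
    using assms graph_finite_edges[OF assms(1)] by (simp add: degree_def card_Diff_singleton)
  then obtain f1 B where "?D = insert f1 B" "f1 \<notin> B" "1 \<le> card B" by (auto simp: card_le_Suc_iff)
  moreover from calculation obtain f2 where "f2 \<in> B" by fastforce
  ultimately have f: "f1 \<in> ?D" "f2 \<in> ?D" "f1 \<noteq> f2" by auto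
  obtain e1 where e1: "f1 = {d,e1}" using graph_edge_other_end[OF assms(1)] f(1) by blast
  obtain e2 where e2: "f2 = {d,e2}" using graph_edge_other_end[OF assms(1)] f(2) by blast
  have "{d,e1} \<noteq> {c,d}" "{d,e2} \<noteq> {c,d}" "{d,e1} \<noteq> {d,e2}" "{d,e1} \<in> E" "{d,e2} \<in> E"
    using f e1 e2 by auto
  then show ?thesis using that by (auto simp: doubleton_eq_iff)
qed

lemma side_has_leaf:
  assumes "is_tree V E" "\<forall>v\<in>V. degree E v \<noteq> 2" "{c,d} \<in> E"
  shows "\<exists>l\<in>side E c d. l \<in> leaves V E"
  using assms(3)
proof (induction "card (side E c d)" arbitrary: c d rule: less_induct)
  case less
  have g: "graph V E" and fin: "finite V" using assms(1) by (auto simp: is_tree_def graph_def)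
  have dV: "d \<in> V" using g less.prems by (auto simp: graph_def)
  show ?case
  proof (cases "degree E d = 1")
    case True
    then show ?thesis using self_in_side[of d E c] dV unfolding leaves_def by blast
  next
    case False
    moreover have "0 < degree E d" using degree_pos_if_edge[OF graph_finite_edges[OF g] less.prems] .
    moreover have "degree E d \<noteq> 2" using assms(2) dV by blast
    ultimately have "2 \<le> degree E d" by linarith
    then obtain e where e: "{d,e} \<in> E" "e \<noteq> c" using degree_ge2_other_neighbour[OF g less.prems] by blast
    have sub: "side E d e \<subseteq> side E c d" using side_subset_side[OF assms(1) less.prems e] .
    have "finite (side E c d)" using side_subset_vertices[OF g less.prems] fin finite_subset by blast
    moreover have "d \<notin> side E d e" using not_in_side[OF assms(1) e(1)] .
    then have "side E d e \<subset> side E c d" using sub self_in_side[of d E c] by blast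
    ultimately have "card (side E d e) < card (side E c d)" by (simp add: psubset_card_mono)
    then obtain l where "l \<in> side E d e" "l \<in> leaves V E" using less.hyps e(1) by blast
    then show ?thesis using sub by blast
  qed
qed

lemma side_has_other_leaf:
  assumes "is_tree V E" "\<forall>v\<in>V. degree E v \<noteq> 2" "{c,d} \<in> E" "3 \<le> degree E d"
  shows "\<exists>l\<in>side E c d. l \<in> leaves V E \<and> l \<noteq> z"
proof -
  have g: "graph V E" using assms(1) by (simp add: is_tree_def)
  obtain e1 e2 where e: "{d,e1} \<in> E" "{d,e2} \<in> E" "e1 \<noteq> c" "e2 \<noteq> c" "e1 \<noteq> e2"
    using degree_ge3_two_other_neighbours[OF g assms(3,4)] by blast
  have "{e1,d} \<in> E" using e(1) by (simp add: insert_commute)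
  then have "side E d e2 \<subseteq> side E e1 d" using side_subset_side[OF assms(1) _ e(2)] e(5) by blast
  then have "side E d e1 \<inter> side E d e2 = {}" using sides_disjoint[OF assms(1) e(1)] by blast
  moreover obtain l1 where "l1 \<in> side E d e1" "l1 \<in> leaves V E" using side_has_leaf[OF assms(1,2) e(1)] by blast
  moreover obtain l2 where "l2 \<in> side E d e2" "l2 \<in> leaves V E" using side_has_leaf[OF assms(1,2) e(2)] by blast
  moreover have "side E d e1 \<subseteq> side E c d" "side E d e2 \<subseteq> side E c d"
    using side_subset_side[OF assms(1,3)] e by blast+
  ultimately show ?thesis by blast
qed

subsection \<open>Edge-disjoint leaf-to-leaf paths\<close>

lemma is_path_interior_not_leaf:
  assumes "graph V E" "is_path V E p" "0 < i" "i < length p - 1"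
  shows "p ! i \<notin> leaves V E"
proof
  assume leaf: "p ! i \<in> leaves V E"
  obtain k where k: "i = Suc k" using assms(3) by (cases i) auto
  have dist: "distinct p" and steps: "\<And>j. Suc j < length p \<Longrightarrow> {p ! j, p ! Suc j} \<in> E"
    using assms(2) by (auto simp: is_path_def adj_def)
  have e1: "{p ! k, p ! i} \<in> E" using steps[of k] k assms(4) by auto
  have e2: "{p ! i, p ! Suc i} \<in> E" using steps[of i] assms(4) by auto
  have "p ! k \<noteq> p ! Suc i" "p ! k \<noteq> p ! i"
    using dist k assms(4) by (simp_all add: nth_eq_iff_index_eq)
  then have ne: "{p ! k, p ! i} \<noteq> {p ! i, p ! Suc i}" by (auto simp: doubleton_eq_iff)
  have "{{p ! k, p ! i}, {p ! i, p ! Suc i}} \<subseteq> {e \<in> E. p ! i \<in> e}" using e1 e2 by auto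
  moreover have "finite {e \<in> E. p ! i \<in> e}" using graph_finite_edges[OF assms(1)] by auto
  ultimately have "card {{p ! k, p ! i}, {p ! i, p ! Suc i}} \<le> degree E (p ! i)"
    unfolding degree_def by (rule card_mono[rotated])
  then have "2 \<le> degree E (p ! i)" using ne by simp
  then show False using leaf by (simp add: leaves_def)
qed

lemma leaf_to_leaf_pathI:
  assumes "graph V E" "is_path V E p" "2 \<le> length p" "hd p \<in> leaves V E" "last p \<in> leaves V E"
  shows "leaf_to_leaf_path V E p"
  unfolding leaf_to_leaf_path_def using assms is_path_interior_not_leaf[OF assms(1,2)] by blast

lemma side_leaf_paths:
  assumes bt: "binary_phylo_tree V E X" and cd: "{c,d} \<in> E" "3 \<le> degree E d"
    and z: "z \<in> X" "z \<in> side E c d"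
  obtains P where "finite P" "\<And>p. p \<in> P \<Longrightarrow> leaf_to_leaf_path V E p \<and> set p \<subseteq> side E c d"
    "disjoint_family_on path_edges P" "\<exists>p\<in>P. endpoint z p"
    "card (X \<inter> side E c d) \<le> 2 * card P + 1"
proof -
  have tr: "is_tree V E" and lv: "leaves V E = X" and nd2: "\<forall>v\<in>V. degree E v \<noteq> 2"
    using bt by (auto simp: binary_phylo_tree_def)
  have g: "graph V E" using tr by (simp add: is_tree_def)
  let ?L = "X \<inter> side E c d"
  obtain l where l: "l \<in> ?L" "l \<noteq> z" using side_has_other_leaf[OF tr nd2 cd, of z] lv by blast
  have XV: "X \<subseteq> V" using lv by (auto simp: leaves_def)
  then have finL: "finite ?L" using g by (auto simp: graph_def finite_subset)
  define S where "S = (if even (card ?L) then ?L else ?L - {l})"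
  have S: "S \<subseteq> ?L" "z \<in> S" using l z by (auto simp: S_def)
  have "card ?L - 1 = card (?L - {l})" using l(1) finL by (simp add: card_Diff_singleton)
  then have cardS: "even (card S)" "card ?L \<le> card S + 1" unfolding S_def using l(1) finL
    by (auto simp: card_gt_0_iff)
  have "S \<subseteq> V" using S(1) XV by blast
  then obtain P where P: "path_pairing V E S P" using even_set_path_pairing[OF tr _ cardS(1)] by blast
  have "leaf_to_leaf_path V E p \<and> set p \<subseteq> side E c d" if "p \<in> P" for p
  proof -
    have "is_path V E p" "2 \<le> length p" "path_ends p \<subseteq> S"
      using P that unfolding path_pairing_def by blast+
    moreover have "hd p \<in> path_ends p" "last p \<in> path_ends p" by (simp_all add: path_ends_def)
    ultimately have "is_path V E p" "2 \<le> length p" "hd p \<in> ?L" "last p \<in> ?L" using S(1) by blast+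
    then show ?thesis using lv leaf_to_leaf_pathI[OF g] is_path_in_side[OF tr cd(1)] by blast
  qed
  moreover have "\<exists>p\<in>P. endpoint z p"
    using P S(2) unfolding path_pairing_def endpoint_iff_in_path_ends by blast
  moreover have "card ?L \<le> 2 * card P + 1" using path_pairing_card[OF P] cardS(2) by linarith
  ultimately show ?thesis using that P unfolding path_pairing_def by blast
qed

lemma separating_edge:
  assumes bt: "binary_phylo_tree V E X" and "3 \<le> card X"
    and xy: "x \<in> X" "y \<in> X" "x \<noteq> y" "\<not> cherry E x y"
  obtains u a where "{u,a} \<in> E" "3 \<le> degree E u" "3 \<le> degree E a"
    "x \<in> side E a u" "y \<in> side E u a"
proof -
  have tr: "is_tree V E" and lv: "leaves V E = X" and dg: "\<forall>v\<in>V. degree E v \<noteq> 2"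
    using bt by (auto simp: binary_phylo_tree_def)
  have g: "graph V E" and conn: "connected_graph V E" and finV: "finite V"
    using tr by (auto simp: is_tree_def graph_def)
  have XV: "X \<subseteq> V" using lv by (auto simp: leaves_def)
  have leaf_degree: "degree E v = 1" if "v \<in> X" for v using that lv by (auto simp: leaves_def)
  have inner_degree: "3 \<le> degree E v" if "{w,v} \<in> E" "v \<notin> X" for v w
  proof -
    have "v \<in> V" using that(1) g by (auto simp: graph_def)
    then have "degree E v \<noteq> 1" "degree E v \<noteq> 2" using that(2) lv dg by (auto simp: leaves_def)
    moreover have "0 < degree E v" using degree_pos_if_edge[OF graph_finite_edges[OF g] that(1)] .
    ultimately show ?thesis by linarith
  qed
  obtain u where xu: "{x,u} \<in> E" and "u \<noteq> x" using degree_one_edge[OF g leaf_degree[OF xy(1)]] by blast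
  have ux: "{u,x} \<in> E" using xu by (simp add: insert_commute)
  have u_inner: "u \<notin> X"
  proof
    assume "u \<in> X"
    then have "V \<subseteq> {u,x}"
      using vertices_subset_sides[OF g conn xu] side_eq_singleton_if_leaf[OF leaf_degree xu]
        side_eq_singleton_if_leaf[OF leaf_degree[OF xy(1)] ux] by auto
    then have "card X \<le> card {u,x}" using XV finV by (meson card_mono finite_insert finite.emptyI order_trans)
    also have "\<dots> \<le> 2" by (simp add: card_insert_le_m1)
    finally show False using assms(2) by simp
  qed
  have "u \<in> V" "y \<in> V" "y \<noteq> u" using xu g XV xy(2) u_inner by (auto simp: graph_def)
  then obtain a where "adj E u a" and ya: "y \<in> side E u a" using exists_neighbour_side[OF conn] by blast
  then have ua: "{u,a} \<in> E" by (simp add: adj_def)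
  have "a \<noteq> x" using ya xy(3) side_eq_singleton_if_leaf[OF leaf_degree[OF xy(1)] ux] by auto
  have a_inner: "a \<notin> X"
  proof
    assume "a \<in> X"
    then have "y = a" using ya side_eq_singleton_if_leaf[OF leaf_degree ua] by auto
    then have "cherry E x y" using xu ua unfolding cherry_def adj_def by (metis insert_commute)
    then show False using xy(4) by contradiction
  qed
  have "adj E u x" "{u,x} \<noteq> {a,u}" using ux \<open>a \<noteq> x\<close> \<open>u \<noteq> x\<close> by (auto simp: adj_def doubleton_eq_iff)
  then have "x \<in> side E a u" using side_step[OF self_in_side[of u E a]] by blast
  then show ?thesis using that ua ya inner_degree[OF xu u_inner] inner_degree[OF ua a_inner] by blast
qed

lemma disjoint_family_on_path_edges_Un:
  assumes "\<And>p. p \<in> P \<Longrightarrow> set p \<subseteq> A" "\<And>p. p \<in> Q \<Longrightarrow> set p \<subseteq> B" "A \<inter> B = {}"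
    and "disjoint_family_on path_edges P" "disjoint_family_on path_edges Q"
  shows "disjoint_family_on path_edges (P \<union> Q)"
proof -
  have cross: "path_edges p \<inter> path_edges p' = {}" if "p \<in> P" "p' \<in> Q" for p p'
  proof (intro equalityI subsetI)
    fix e assume e: "e \<in> path_edges p \<inter> path_edges p'"
    then have "e \<subseteq> set p" "e \<subseteq> set p'" using path_edges_subset_set by blast+
    then have "e \<subseteq> A \<inter> B" using assms(1)[OF that(1)] assms(2)[OF that(2)] by blast
    moreover have "e \<noteq> {}" using e by (auto simp: path_edges_def)
    ultimately show "e \<in> {}" using assms(3) by blast
  qed simp
  show ?thesis
    unfolding disjoint_family_on_def
  proof (intro ballI impI)
    fix p p' assume pp': "p \<in> P \<union> Q" "p' \<in> P \<union> Q" "p \<noteq> p'"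
    then consider "p \<in> P" "p' \<in> P" | "p \<in> Q" "p' \<in> Q" | "p \<in> P" "p' \<in> Q" | "p \<in> Q" "p' \<in> P"
      by blast
    then show "path_edges p \<inter> path_edges p' = {}"
    proof cases
      case 4
      then show ?thesis using cross[of p' p] by (simp add: Int_commute)
    qed (use cross assms(4,5) pp'(3) disjoint_family_onD in metis)+
  qed
qed

lemma finite_indexing_from_two:
  assumes "finite A" "a \<in> A" "b \<in> A" "a \<noteq> b" "q \<le> card A"
  obtains f :: "nat \<Rightarrow> 'a" where "f 1 = a" "f 2 = b" "f ` {1..q} \<subseteq> A" "inj_on f {1..q}"
proof -
  obtain xs where xs: "set xs = A - {a,b}" "distinct xs" using assms(1) finite_distinct_list by blast
  let ?ys = "a # b # xs"
  have ys: "distinct ?ys" "set ?ys = A" using xs assms(2-4) by auto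
  then have len: "length ?ys = card A" by (metis distinct_card)
  define f where "f i = ?ys ! (i - 1)" for i
  have "f ` {1..q} \<subseteq> A"
  proof
    fix z assume "z \<in> f ` {1..q}"
    then obtain i where "i \<in> {1..q}" "z = f i" by blast
    moreover from this have "i - 1 < length ?ys" using len assms(5) by auto
    ultimately show "z \<in> A" using ys(2) nth_mem unfolding f_def by metis
  qed
  moreover have "inj_on f {1..q}"
    using len assms(5) nth_eq_iff_index_eq[OF ys(1)] by (auto simp: f_def inj_on_def)
  moreover have "f 1 = a" "f 2 = b" by (simp_all add: f_def)
  ultimately show ?thesis using that by blast
qed

lemma edge_disjoint_leaf_paths_ending_at:
  assumes bt: "binary_phylo_tree V E X" and "3 \<le> card X"
    and xy: "x \<in> X" "y \<in> X" "x \<noteq> y" "\<not> cherry E x y"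
  obtains PP px py where "finite PP" "\<forall>p\<in>PP. leaf_to_leaf_path V E p"
    "disjoint_family_on path_edges PP" "max 2 ((card X - 1) div 2) \<le> card PP"
    "px \<in> PP" "py \<in> PP" "px \<noteq> py" "endpoint x px" "endpoint y py"
proof -
  obtain u a where ua: "{u,a} \<in> E" "3 \<le> degree E u" "3 \<le> degree E a"
    "x \<in> side E a u" "y \<in> side E u a"
    using separating_edge[OF assms] by blast
  have au: "{a,u} \<in> E" using ua(1) by (simp add: insert_commute)
  obtain PA where PA: "finite PA" "\<And>p. p \<in> PA \<Longrightarrow> leaf_to_leaf_path V E p \<and> set p \<subseteq> side E u a"
      "disjoint_family_on path_edges PA" "\<exists>p\<in>PA. endpoint y p"
      "card (X \<inter> side E u a) \<le> 2 * card PA + 1"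
    using side_leaf_paths[OF bt ua(1,3) xy(2) ua(5)] by blast
  obtain PW where PW: "finite PW" "\<And>p. p \<in> PW \<Longrightarrow> leaf_to_leaf_path V E p \<and> set p \<subseteq> side E a u"
      "disjoint_family_on path_edges PW" "\<exists>p\<in>PW. endpoint x p"
      "card (X \<inter> side E a u) \<le> 2 * card PW + 1"
    using side_leaf_paths[OF bt au ua(2) xy(1) ua(4)] by blast
  obtain py where py: "py \<in> PA" "endpoint y py" using PA(4) by blast
  obtain px where px: "px \<in> PW" "endpoint x px" using PW(4) by blast
  have tr: "is_tree V E" and XV: "X \<subseteq> V" using bt by (auto simp: binary_phylo_tree_def leaves_def)
  have disj: "side E u a \<inter> side E a u = {}" using sides_disjoint[OF tr ua(1)] .
  have "card X = card (X \<inter> side E u a) + card (X \<inter> side E a u)"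
    using card_split_by_sides[OF tr ua(1) XV] .
  moreover have "PA \<inter> PW = {}"
  proof (intro equalityI subsetI)
    fix p assume p: "p \<in> PA \<inter> PW"
    then have "set p \<subseteq> side E u a \<inter> side E a u" using PA(2) PW(2) by blast
    then have "set p = {}" unfolding disj by simp
    moreover have "2 \<le> length p" using p PA(2) by (simp add: leaf_to_leaf_path_def)
    ultimately show "p \<in> {}" by simp
  qed simp
  then have "card (PA \<union> PW) = card PA + card PW" using card_Un_disjoint PA(1) PW(1) by blast
  moreover have "0 < card PA" "0 < card PW" using py(1) px(1) PA(1) PW(1) card_gt_0_iff by blast+
  ultimately have "max 2 ((card X - 1) div 2) \<le> card (PA \<union> PW)" using PA(5) PW(5) by linarith
  moreover have "disjoint_family_on path_edges (PA \<union> PW)"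
    using disjoint_family_on_path_edges_Un[OF _ _ disj PA(3) PW(3)] PA(2) PW(2) by blast
  moreover have "px \<noteq> py" using px(1) py(1) \<open>PA \<inter> PW = {}\<close> by blast
  ultimately show ?thesis using that[of "PA \<union> PW" px py] PA PW px py by blast
qed

theorem lemma3:
  fixes V :: "'v set" and E :: "'v set set" and X :: "'v set" and x y :: 'v and n q :: nat
  assumes "binary_phylo_tree V E X"
    and "card X = n" and "n \<ge> 3"
    and "x \<in> X" and "y \<in> X" and "x \<noteq> y"
    and "\<not> cherry E x y"
    and "q = max 2 ((n - 1) div 2)"
  shows "\<exists>P :: nat \<Rightarrow> 'v list.
           (\<forall>i\<in>{1..q}. leaf_to_leaf_path V E (P i)) \<and>
           (\<forall>i\<in>{1..q}. \<forall>j\<in>{1..q}. i \<noteq> j \<longrightarrow> path_edges (P i) \<inter> path_edges (P j) = {}) \<and>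
           endpoint x (P 1) \<and> endpoint y (P 2)"
proof -
  obtain PP px py where PP: "finite PP" "\<forall>p\<in>PP. leaf_to_leaf_path V E p"
    "disjoint_family_on path_edges PP" "q \<le> card PP"
    "px \<in> PP" "py \<in> PP" "px \<noteq> py" "endpoint x px" "endpoint y py"
    using edge_disjoint_leaf_paths_ending_at[OF assms(1) _ assms(4-7)] assms(2,3,8) by auto
  obtain P where P: "P 1 = px" "P 2 = py" "P ` {1..q} \<subseteq> PP" "inj_on P {1..q}"
    using finite_indexing_from_two[OF PP(1,5,6,7,4)] by blast
  have "path_edges (P i) \<inter> path_edges (P j) = {}" if "i \<in> {1..q}" "j \<in> {1..q}" "i \<noteq> j" for i j
    using disjoint_family_onD[OF PP(3)] P(3,4) that by (meson image_subset_iff inj_on_contraD)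
  then show ?thesis using PP(2,8,9) P by blast
qed

end
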